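(* Let $G$ be an $(a\times b)$ simple grid and $c:V(G)\to\{1,2,3\}$ a proper coloring. For every simple directed cycle $C$ in $G$ (no repeated nodes), $b(C)=0$.
   Context: An $(a\times b)$ simple grid has node set $\{(i,j): i\in[a], j\in[b]\}$, with $(i,j)$ and $(i',j')$ adjacent iff $|i-i'|+|j-j'|=1$. Given a graph $G=(V,E)$ with a proper coloring $c:V\to\{1,2,3\}$, for an edge $\{u,v\}\in E$ define $a(u,v)=c(u)-c(v)$ if $c(u)\ne 3$ and $c(v)\ne 3$, and $a(u,v)=0$ otherwise. For a directed path or directed cycle $H$ (a path or cycle of $G$ with its edges oriented consistently along it), define $b(H)=\sum_{(u,v)\in H}a(u,v)$, the sum over its directed edges; a path of length zero has $b$-value $0$. *)

theory Defs
  imports Main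
begin

definition grid_nodes :: "nat \<Rightarrow> nat \<Rightarrow> (nat \<times> nat) set" where
  "grid_nodes a b = {1..a} \<times> {1..b}"

definition grid_adj :: "nat \<times> nat \<Rightarrow> nat \<times> nat \<Rightarrow> bool" where
  "grid_adj u v \<longleftrightarrow>
     \<bar>int (fst u) - int (fst v)\<bar> + \<bar>int (snd u) - int (snd v)\<bar> = 1"

definition proper_3coloring :: "nat \<Rightarrow> nat \<Rightarrow> (nat \<times> nat \<Rightarrow> int) \<Rightarrow> bool" where
  "proper_3coloring a b c \<longleftrightarrow>
     (\<forall>v \<in> grid_nodes a b. c v \<in> {1, 2, 3}) \<and>
     (\<forall>u \<in> grid_nodes a b. \<forall>v \<in> grid_nodes a b. grid_adj u v \<longrightarrow> c u \<noteq> c v)"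

definition aval :: "(nat \<times> nat \<Rightarrow> int) \<Rightarrow> nat \<times> nat \<Rightarrow> nat \<times> nat \<Rightarrow> int" where
  "aval c u v = (if c u \<noteq> 3 \<and> c v \<noteq> 3 then c u - c v else 0)"

definition grid_dir_cycle :: "nat \<Rightarrow> nat \<Rightarrow> (nat \<times> nat) list \<Rightarrow> bool" where
  "grid_dir_cycle a b vs \<longleftrightarrow>
     length vs \<ge> 3 \<and> distinct vs \<and> set vs \<subseteq> grid_nodes a b \<and>
     (\<forall>i < length vs. grid_adj (vs ! i) (vs ! ((i + 1) mod length vs)))"

definition bval_cycle :: "(nat \<times> nat \<Rightarrow> int) \<Rightarrow> (nat \<times> nat) list \<Rightarrow> int" where
  "bval_cycle c vs = (\<Sum>i < length vs. aval c (vs ! i) (vs ! ((i + 1) mod length vs)))"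

end

theory Submission
  imports Defs
begin

text \<open>The edge weights a(u,v) of a proper 3-colouring have zero circulation around every
  unit square of the grid. Since the grid is simply connected, they are then the differences of a
  potential, obtained by integrating along row 1 and then down the columns, and the sum of a
  gradient around any closed walk telescopes to zero.\<close>

lemma aval_swap: "aval c u v = - aval c v u"
  unfolding aval_def by auto

lemma aval_4cycle_sum_eq_0:
  assumes "c p \<in> {1,2,3}" "c q \<in> {1,2,3}" "c r \<in> {1,2,3}" "c s \<in> {1,2,3}"
    and "c p \<noteq> c q" "c q \<noteq> c r" "c r \<noteq> c s" "c s \<noteq> c p"
  shows "aval c p q + aval c q r + aval c r s + aval c s p = 0"
  using assms unfolding aval_def by auto

lemma proper_3coloring_square_sum_eq_0:
  assumes col: "proper_3coloring a b c"
    and ij: "1 \<le> i" "Suc i \<le> a" "1 \<le> j" "Suc j \<le> b"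
  shows "aval c (i, j) (i, Suc j) + aval c (i, Suc j) (Suc i, Suc j)
       + aval c (Suc i, Suc j) (Suc i, j) + aval c (Suc i, j) (i, j) = 0"
proof (rule aval_4cycle_sum_eq_0)
  let ?V = "{(i, j), (i, Suc j), (Suc i, Suc j), (Suc i, j)}"
  have "?V \<subseteq> grid_nodes a b"
    using ij by (auto simp: grid_nodes_def)
  then show "c (i, j) \<in> {1,2,3}" "c (i, Suc j) \<in> {1,2,3}"
    "c (Suc i, Suc j) \<in> {1,2,3}" "c (Suc i, j) \<in> {1,2,3}"
    "c (i, j) \<noteq> c (i, Suc j)" "c (i, Suc j) \<noteq> c (Suc i, Suc j)"
    "c (Suc i, Suc j) \<noteq> c (Suc i, j)" "c (Suc i, j) \<noteq> c (i, j)"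
    using col unfolding proper_3coloring_def by (auto simp: grid_adj_def)
qed

text \<open>Row 0 and column 0 lie outside the grid; the values there are junk.\<close>
fun grid_potential :: "(nat \<times> nat \<Rightarrow> nat \<times> nat \<Rightarrow> int) \<Rightarrow> nat \<times> nat \<Rightarrow> int" where
  "grid_potential w (0, j) = 0"
| "grid_potential w (Suc 0, 0) = 0"
| "grid_potential w (Suc 0, Suc j) = grid_potential w (1, j) - w (1, j) (1, Suc j)"
| "grid_potential w (Suc (Suc i), j) = grid_potential w (Suc i, j) - w (Suc i, j) (Suc (Suc i), j)"

lemma grid_potential_down:
  "1 \<le> i \<Longrightarrow> w (i, j) (Suc i, j) = grid_potential w (i, j) - grid_potential w (Suc i, j)"
  by (cases i) auto

context
  fixes a b :: nat and w :: "nat \<times> nat \<Rightarrow> nat \<times> nat \<Rightarrow> int"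
  assumes antisym: "\<And>u v. w u v = - w v u"
    and square: "\<And>i j. 1 \<le> i \<Longrightarrow> Suc i \<le> a \<Longrightarrow> 1 \<le> j \<Longrightarrow> Suc j \<le> b \<Longrightarrow>
      w (i, j) (i, Suc j) + w (i, Suc j) (Suc i, Suc j) + w (Suc i, Suc j) (Suc i, j)
      + w (Suc i, j) (i, j) = 0"
begin

lemma grid_potential_right:
  "1 \<le> i \<Longrightarrow> i \<le> a \<Longrightarrow> 1 \<le> j \<Longrightarrow> Suc j \<le> b \<Longrightarrow>
    w (i, j) (i, Suc j) = grid_potential w (i, j) - grid_potential w (i, Suc j)"
proof (induction i rule: nat_induct_at_least)
  case base
  then show ?case by simp
next
  case (Suc i)
  have "w (i, j) (i, Suc j) = grid_potential w (i, j) - grid_potential w (i, Suc j)"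
    using Suc by simp
  moreover have "w (i, Suc j) (Suc i, Suc j) + w (Suc i, Suc j) (Suc i, j)
      + w (Suc i, j) (i, j) + w (i, j) (i, Suc j) = 0"
    using square[of i j] Suc.prems Suc.hyps by simp
  moreover have "w (i, Suc j) (Suc i, Suc j)
      = grid_potential w (i, Suc j) - grid_potential w (Suc i, Suc j)"
    "w (Suc i, j) (i, j) = grid_potential w (Suc i, j) - grid_potential w (i, j)"
    using grid_potential_down[of i w] antisym[of "(Suc i, j)" "(i, j)"] Suc.hyps by auto
  ultimately show ?case
    using antisym[of "(Suc i, Suc j)" "(Suc i, j)"] by linarith
qed

lemma grid_potential_edge:
  assumes "u \<in> grid_nodes a b" "v \<in> grid_nodes a b" "grid_adj u v"
  shows "w u v = grid_potential w u - grid_potential w v"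
proof -
  obtain i j k l where u: "u = (i, j)" and v: "v = (k, l)"
    by (cases u, cases v) auto
  have bounds: "1 \<le> i" "i \<le> a" "1 \<le> j" "j \<le> b" "1 \<le> k" "k \<le> a" "1 \<le> l" "l \<le> b"
    using assms(1,2) u v by (auto simp: grid_nodes_def)
  have "\<bar>int i - int k\<bar> + \<bar>int j - int l\<bar> = 1"
    using assms(3) u v by (simp add: grid_adj_def)
  then consider "k = i" "l = Suc j" | "k = i" "j = Suc l" | "l = j" "k = Suc i" | "l = j" "i = Suc k"
    by arith
  then show ?thesis
  proof cases
    case 1
    then show ?thesis using grid_potential_right[of i j] bounds u v by simp
  next
    case 2
    then show ?thesis using grid_potential_right[of i l] bounds u v antisym[of u v] by simp
  next
    case 3
    then show ?thesis using grid_potential_down[of i w j] bounds u v by simp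
  next
    case 4
    then show ?thesis using grid_potential_down[of k w j] bounds u v antisym[of u v] by simp
  qed
qed

end

lemma sum_cyclic_differences:
  fixes f :: "nat \<Rightarrow> 'a::ab_group_add"
  assumes "n > 0"
  shows "(\<Sum>i<n. f i - f ((i + 1) mod n)) = 0"
proof -
  obtain m where n: "n = Suc m"
    using assms by (cases n) auto
  have "(\<Sum>i<Suc m. f ((i + 1) mod Suc m)) = (\<Sum>i<m. f ((i + 1) mod Suc m)) + f 0"
    by (simp add: sum.lessThan_Suc)
  also have "(\<Sum>i<m. f ((i + 1) mod Suc m)) = (\<Sum>i<m. f (Suc i))"
    by (rule sum.cong) auto
  also have "(\<Sum>i<m. f (Suc i)) + f 0 = (\<Sum>i<Suc m. f i)"
    unfolding sum.lessThan_Suc_shift by (rule add.commute)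
  finally show ?thesis
    using n by (simp add: sum_subtractf)
qed

theorem mainTheorem10:
  fixes a b :: nat and c :: "nat \<times> nat \<Rightarrow> int" and C :: "(nat \<times> nat) list"
  assumes "proper_3coloring a b c"
    and "grid_dir_cycle a b C"
  shows "bval_cycle c C = 0"
proof -
  let ?n = "length C" and ?\<phi> = "grid_potential (aval c)"
  have cyc: "?n \<ge> 3" "set C \<subseteq> grid_nodes a b"
    "\<forall>i < ?n. grid_adj (C ! i) (C ! ((i + 1) mod ?n))"
    using assms(2) unfolding grid_dir_cycle_def by auto
  have "bval_cycle c C = (\<Sum>i<?n. ?\<phi> (C ! i) - ?\<phi> (C ! ((i + 1) mod ?n)))"
    unfolding bval_cycle_def
  proof (rule sum.cong)
    fix i assume i: "i \<in> {..<?n}"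
    have "(i + 1) mod ?n < ?n"
      using cyc(1) by (intro mod_less_divisor) linarith
    then show "aval c (C ! i) (C ! ((i + 1) mod ?n))
        = ?\<phi> (C ! i) - ?\<phi> (C ! ((i + 1) mod ?n))"
      using i cyc
      by (intro grid_potential_edge[OF aval_swap proper_3coloring_square_sum_eq_0[OF assms(1)]])
        auto
  qed simp
  also have "\<dots> = 0"
    by (rule sum_cyclic_differences) (use cyc(1) in linarith)
  finally show ?thesis .
qed

end
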